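(* For $1\le i\le k$ let $G_i$ be an $r_i$-regular graph with $n_i\ge 2$ vertices and let $A_i$ be an Abelian group of order $n_i$; put $r=\sum_{i=1}^k r_i$. Suppose $\{1,\ldots,k\}$ is partitioned into three (possibly empty) sets $I,J,L$ such that: (a) for each $i\in I$, $G_i$ is $A_i$-distance magic and $\gcd(r-r_i,n_i)=1$; (b) for each $j\in J$, $G_j$ is $A_j$-distance antimagic and $\exp(A_j)$ divides $r-r_j$; (c) for each $l\in L$, $G_l$ admits an $A_l$-balanced labelling and $\gcd(r,n_l)=1$. Then $G_1\Box\cdots\Box G_k$ is $A_1\times\cdots\times A_k$-distance antimagic.
   Context: The Cartesian product $G_1\Box\cdots\Box G_k$ has vertex set $V(G_1)\times\cdots\times V(G_k)$, with $(x_1,\ldots,x_k)$ and $(y_1,\ldots,y_k)$ adjacent iff they differ in exactly one coordinate $i$ and $x_iy_i\in E(G_i)$. $\exp(A)$ is the least positive integer $m$ with $mx=0$ for all $x\in A$. For a graph $G$ with $n$ vertices and an Abelian group $A$ of order $n$ (written additively), and a bijection $f:V(G)\to A$, the weight of $x$ is $w_f(x)=\sum_{y\in N(x)} f(y)$ computed in $A$ ($N(x)$ the open neighbourhood). $f$ is an $A$-distance antimagic labelling if all weights are pairwise distinct, and an $A$-distance magic labelling if all weights are equal. $G$ is $A$-distance antimagic (resp. magic) if it admits such a labelling. If $G$ is $r$-regular, a bijection $f:V(G)\to A$ is an $A$-balanced labelling if $w_f(x)=r f(x)$ for every $x\in V(G)$. *)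

theory Defs
  imports "HOL-Algebra.Algebra"
begin

definition simple_graph :: "'a set \<Rightarrow> ('a \<Rightarrow> 'a \<Rightarrow> bool) \<Rightarrow> bool" where
  "simple_graph V E \<longleftrightarrow> finite V \<and>
     (\<forall>x y. E x y \<longrightarrow> x \<in> V \<and> y \<in> V \<and> x \<noteq> y \<and> E y x)"

definition nbhd :: "'a set \<Rightarrow> ('a \<Rightarrow> 'a \<Rightarrow> bool) \<Rightarrow> 'a \<Rightarrow> 'a set" where
  "nbhd V E x = {y \<in> V. E x y}"

definition regular :: "'a set \<Rightarrow> ('a \<Rightarrow> 'a \<Rightarrow> bool) \<Rightarrow> nat \<Rightarrow> bool" where
  "regular V E r \<longleftrightarrow> (\<forall>x\<in>V. card (nbhd V E x) = r)"

text \<open>Weight of x under labelling f with values in the (commutative) group A;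
the group operation of A plays the role of the additive operation.\<close>
definition weight :: "('g, 'c) monoid_scheme \<Rightarrow> 'a set \<Rightarrow> ('a \<Rightarrow> 'a \<Rightarrow> bool) \<Rightarrow> ('a \<Rightarrow> 'g) \<Rightarrow> 'a \<Rightarrow> 'g" where
  "weight A V E f x = finprod A f (nbhd V E x)"

definition distance_antimagic_labelling ::
  "('g, 'c) monoid_scheme \<Rightarrow> 'a set \<Rightarrow> ('a \<Rightarrow> 'a \<Rightarrow> bool) \<Rightarrow> ('a \<Rightarrow> 'g) \<Rightarrow> bool" where
  "distance_antimagic_labelling A V E f \<longleftrightarrow>
     bij_betw f V (carrier A) \<and> inj_on (weight A V E f) V"

definition distance_magic_labelling ::
  "('g, 'c) monoid_scheme \<Rightarrow> 'a set \<Rightarrow> ('a \<Rightarrow> 'a \<Rightarrow> bool) \<Rightarrow> ('a \<Rightarrow> 'g) \<Rightarrow> bool" where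
  "distance_magic_labelling A V E f \<longleftrightarrow>
     bij_betw f V (carrier A) \<and> (\<forall>x\<in>V. \<forall>y\<in>V. weight A V E f x = weight A V E f y)"

definition distance_antimagic :: "('g, 'c) monoid_scheme \<Rightarrow> 'a set \<Rightarrow> ('a \<Rightarrow> 'a \<Rightarrow> bool) \<Rightarrow> bool" where
  "distance_antimagic A V E \<longleftrightarrow> (\<exists>f. distance_antimagic_labelling A V E f)"

definition distance_magic :: "('g, 'c) monoid_scheme \<Rightarrow> 'a set \<Rightarrow> ('a \<Rightarrow> 'a \<Rightarrow> bool) \<Rightarrow> bool" where
  "distance_magic A V E \<longleftrightarrow> (\<exists>f. distance_magic_labelling A V E f)"

definition balanced_labelling ::
  "('g, 'c) monoid_scheme \<Rightarrow> 'a set \<Rightarrow> ('a \<Rightarrow> 'a \<Rightarrow> bool) \<Rightarrow> nat \<Rightarrow> ('a \<Rightarrow> 'g) \<Rightarrow> bool" where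
  "balanced_labelling A V E r f \<longleftrightarrow>
     bij_betw f V (carrier A) \<and> (\<forall>x\<in>V. weight A V E f x = f x [^]\<^bsub>A\<^esub> r)"

definition group_exponent :: "('g, 'c) monoid_scheme \<Rightarrow> nat" where
  "group_exponent A = (LEAST m. 0 < m \<and> (\<forall>x\<in>carrier A. x [^]\<^bsub>A\<^esub> m = \<one>\<^bsub>A\<^esub>))"

definition cart_V :: "'i set \<Rightarrow> ('i \<Rightarrow> 'a set) \<Rightarrow> ('i \<Rightarrow> 'a) set" where
  "cart_V K V = PiE K V"

definition cart_E :: "'i set \<Rightarrow> ('i \<Rightarrow> 'a \<Rightarrow> 'a \<Rightarrow> bool) \<Rightarrow> ('i \<Rightarrow> 'a) \<Rightarrow> ('i \<Rightarrow> 'a) \<Rightarrow> bool" where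
  "cart_E K E x y \<longleftrightarrow>
     (\<exists>i\<in>K. E i (x i) (y i) \<and> (\<forall>j. j \<noteq> i \<longrightarrow> x j = y j))"

end

theory Submission
  imports Defs "HOL-Number_Theory.Cong"
begin

text \<open>Label the product by \<open>F(x) = (f\<^sub>1(x\<^sub>1), \<dots>, f\<^sub>k(x\<^sub>k))\<close>. A neighbour of \<open>x\<close>
  changes exactly one coordinate \<open>i\<close>, and if \<open>i \<noteq> j\<close> it still contributes \<open>f\<^sub>j(x\<^sub>j)\<close>
  to the \<open>j\<close>-th coordinate of the weight; since \<open>G\<^sub>i\<close> is \<open>r\<^sub>i\<close>-regular, the \<open>j\<close>-th
  coordinate of \<open>w\<^sub>F(x)\<close> is \<open>w\<^sub>f\<^sub>j(x\<^sub>j) + (r - r\<^sub>j) f\<^sub>j(x\<^sub>j)\<close>. So \<open>F\<close> is antimagic as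
  soon as every \<open>v \<mapsto> w\<^sub>f\<^sub>j(v) + (r - r\<^sub>j) f\<^sub>j(v)\<close> is injective. For a magic \<open>f\<^sub>j\<close>
  the weight is constant and multiplication by \<open>r - r\<^sub>j\<close> is injective by coprimality; for
  an antimagic \<open>f\<^sub>j\<close> the shift vanishes because \<open>exp(A\<^sub>j)\<close> divides \<open>r - r\<^sub>j\<close>; for a
  balanced \<open>f\<^sub>j\<close> the map is \<open>v \<mapsto> r f\<^sub>j(v)\<close>, injective because \<open>gcd(r, n\<^sub>j) = 1\<close>.\<close>

lemma comm_group_product_group:
  assumes "\<And>i. i \<in> I \<Longrightarrow> comm_group (G i)"
  shows "comm_group (product_group I G)"
proof (rule group.group_comm_groupI)
  show "group (product_group I G)"
    using assms by (simp add: comm_group.axioms(2))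
  fix x y assume "x \<in> carrier (product_group I G)" "y \<in> carrier (product_group I G)"
  then show "x \<otimes>\<^bsub>product_group I G\<^esub> y = y \<otimes>\<^bsub>product_group I G\<^esub> x"
    using assms by (auto simp: PiE_iff intro!: restrict_ext comm_monoid.m_comm[OF comm_group.axioms(1)])
qed

lemma finprod_product_group_apply:
  assumes "\<And>i. i \<in> I \<Longrightarrow> comm_group (G i)" "finite S"
    and "F \<in> S \<rightarrow> carrier (product_group I G)" "i \<in> I"
  shows "finprod (product_group I G) F S i = finprod (G i) (\<lambda>s. F s i) S"
proof -
  interpret P: comm_group "product_group I G" by (rule comm_group_product_group[OF assms(1)])
  interpret Gi: comm_group "G i" using assms(1,4) .
  show ?thesis
    using assms(2,3)
  proof (induction S rule: finite_induct)
    case (insert a S)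
    have "finprod (G i) (\<lambda>s. F s i) (insert a S) = F a i \<otimes>\<^bsub>G i\<^esub> finprod (G i) (\<lambda>s. F s i) S"
      using insert assms(4) by (intro Gi.finprod_insert) (auto simp: PiE_iff Pi_iff)
    moreover have "finprod (product_group I G) F (insert a S)
        = F a \<otimes>\<^bsub>product_group I G\<^esub> finprod (product_group I G) F S"
      using insert by (intro P.finprod_insert) auto
    ultimately show ?case using insert.IH insert.prems assms(4) by simp
  qed (simp add: assms(4))
qed

lemma (in comm_monoid) finprod_nat_pow_sum:
  assumes "a \<in> carrier G"
  shows "finprod G (\<lambda>i. a [^] (g i :: nat)) S = a [^] sum g S"
proof (induction S rule: infinite_finite_induct)
  case (insert i S)
  then show ?case using assms by (simp add: Pi_iff nat_pow_mult)
qed simp_all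

lemma (in group) nat_pow_mod_order:
  assumes "x \<in> carrier G"
  shows "x [^] (n mod order G) = x [^] n"
proof -
  have "x [^] n = (x [^] order G) [^] (n div order G) \<otimes> x [^] (n mod order G)"
    using assms by (metis div_mult_mod_eq mult.commute nat_pow_mult nat_pow_pow nat_pow_closed)
  then show ?thesis using assms by (simp add: pow_order_eq_1)
qed

lemma (in group) inj_on_nat_pow_coprime:
  assumes "coprime m (order G)"
  shows "inj_on (\<lambda>x. x [^] m) (carrier G)"
proof -
  obtain u where u: "[m * u = 1] (mod order G)"
    using cong_solve_coprime_nat[OF assms] by auto
  have "(x [^] m) [^] u = x" if x: "x \<in> carrier G" for x
  proof -
    have "(x [^] m) [^] u = x [^] (m * u mod order G)"
      using nat_pow_mod_order[OF x, of "m * u"] by (simp only: nat_pow_pow[OF x])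
    also have "\<dots> = x [^] (1 mod order G)"
      using u by (simp only: cong_def)
    also have "\<dots> = x [^] (1::nat)"
      by (rule nat_pow_mod_order[OF x])
    also have "\<dots> = x"
      using x by simp
    finally show ?thesis .
  qed
  then show ?thesis by (rule inj_on_inverseI)
qed

text \<open>The group order witnesses the \<open>LEAST\<close> in \<open>group_exponent_def\<close>; this needs finiteness.\<close>
lemma (in group) nat_pow_group_exponent_dvd:
  assumes "finite (carrier G)" "group_exponent G dvd m" "x \<in> carrier G"
  shows "x [^] m = \<one>"
proof -
  have "0 < order G \<and> (\<forall>y\<in>carrier G. y [^] order G = \<one>)"
    using assms(1) order_gt_0_iff_finite pow_order_eq_1 by blast
  then have "\<forall>y\<in>carrier G. y [^] group_exponent G = \<one>"
    unfolding group_exponent_def by (rule LeastI2_ex[OF exI]) blast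
  moreover obtain q where "m = group_exponent G * q" using assms(2) by blast
  ultimately show ?thesis using assms(3) by (metis nat_pow_pow nat_pow_one)
qed

text \<open>In additive notation \<open>x \<mapsto> w\<^sub>f(x) + m f(x)\<close> is injective; with \<open>m = r - r\<^sub>j\<close> this is
  the \<open>j\<close>-th coordinate of the weight of the product labelling.\<close>
definition shifted_antimagic_labelling ::
  "('g, 'c) monoid_scheme \<Rightarrow> 'a set \<Rightarrow> ('a \<Rightarrow> 'a \<Rightarrow> bool) \<Rightarrow> nat \<Rightarrow> ('a \<Rightarrow> 'g) \<Rightarrow> bool" where
  "shifted_antimagic_labelling A V E m f \<longleftrightarrow>
     bij_betw f V (carrier A) \<and> inj_on (\<lambda>x. weight A V E f x \<otimes>\<^bsub>A\<^esub> f x [^]\<^bsub>A\<^esub> m) V"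

lemma (in comm_monoid) weight_closed:
  assumes "f \<in> V \<rightarrow> carrier G"
  shows "weight G V E f x \<in> carrier G"
  unfolding weight_def using assms by (intro finprod_closed) (auto simp: nbhd_def)

lemma (in comm_group) distance_magic_labelling_shifted:
  assumes "distance_magic_labelling G V E f" "coprime m (order G)"
  shows "shifted_antimagic_labelling G V E m f"
proof -
  have bij: "bij_betw f V (carrier G)"
    and magic: "\<And>x y. x \<in> V \<Longrightarrow> y \<in> V \<Longrightarrow> weight G V E f x = weight G V E f y"
    using assms(1) unfolding distance_magic_labelling_def by blast+
  have f: "f \<in> V \<rightarrow> carrier G" using bij by (rule bij_betw_imp_funcset)
  have "x = y"
    if x: "x \<in> V" and y: "y \<in> V"
      and eq: "weight G V E f x \<otimes> f x [^] m = weight G V E f y \<otimes> f y [^] m" for x y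
  proof -
    have fx: "f x \<in> carrier G" and fy: "f y \<in> carrier G"
      using x y f by auto
    have "weight G V E f x \<otimes> f x [^] m = weight G V E f x \<otimes> f y [^] m"
      using eq by (simp only: magic[OF x y])
    then have "f x [^] m = f y [^] m"
      by (rule l_cancel[OF _ nat_pow_closed[OF fx] nat_pow_closed[OF fy] weight_closed[OF f]])
    then have "f x = f y"
      using fx fy by (rule inj_onD[OF inj_on_nat_pow_coprime[OF assms(2)]])
    then show "x = y" using x y bij by (auto simp: bij_betw_def dest: inj_onD)
  qed
  then show ?thesis using bij unfolding shifted_antimagic_labelling_def by (blast intro: inj_onI)
qed

lemma (in comm_group) distance_antimagic_labelling_shifted:
  assumes "finite (carrier G)" "distance_antimagic_labelling G V E f" "group_exponent G dvd m"
  shows "shifted_antimagic_labelling G V E m f"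
proof -
  have bij: "bij_betw f V (carrier G)" and inj: "inj_on (weight G V E f) V"
    using assms(2) by (auto simp: distance_antimagic_labelling_def)
  have f: "f \<in> V \<rightarrow> carrier G" using bij by (rule bij_betw_imp_funcset)
  have "weight G V E f x \<otimes> f x [^] m = weight G V E f x" if "x \<in> V" for x
  proof -
    have "f x [^] m = \<one>"
      using that f nat_pow_group_exponent_dvd[OF assms(1,3)] by blast
    then show ?thesis using weight_closed[OF f] by simp
  qed
  then show ?thesis
    using bij inj by (simp add: shifted_antimagic_labelling_def cong: inj_on_cong)
qed

lemma (in comm_group) balanced_labelling_shifted:
  assumes "balanced_labelling G V E r f" "coprime (r + m) (order G)"
  shows "shifted_antimagic_labelling G V E m f"
proof -
  have bij: "bij_betw f V (carrier G)"
    and balanced: "\<And>x. x \<in> V \<Longrightarrow> weight G V E f x = f x [^] r"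
    using assms(1) by (auto simp: balanced_labelling_def)
  have "inj_on ((\<lambda>y. y [^] (r + m)) \<circ> f) V"
    using bij inj_on_nat_pow_coprime[OF assms(2)] by (auto simp: bij_betw_def intro: comp_inj_on)
  moreover have "weight G V E f x \<otimes> f x [^] m = ((\<lambda>y. y [^] (r + m)) \<circ> f) x" if "x \<in> V" for x
    using that balanced bij_betw_apply[OF bij] by (simp add: nat_pow_mult)
  ultimately show ?thesis
    using bij by (simp add: shifted_antimagic_labelling_def cong: inj_on_cong)
qed

lemma nbhd_cart_E:
  assumes "x \<in> cart_V K V"
  shows "nbhd (cart_V K V) (cart_E K E) x = (\<Union>i\<in>K. (\<lambda>v. x(i := v)) ` nbhd (V i) (E i) (x i))"
proof (intro equalityI subsetI)
  fix y assume "y \<in> nbhd (cart_V K V) (cart_E K E) x"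
  then obtain i where i: "i \<in> K" "E i (x i) (y i)" "\<And>j. j \<noteq> i \<Longrightarrow> x j = y j"
    and y: "y \<in> PiE K V"
    by (auto simp: nbhd_def cart_V_def cart_E_def)
  have "y = x(i := y i)" using i by auto
  moreover have "y i \<in> nbhd (V i) (E i) (x i)" using i y by (auto simp: nbhd_def)
  ultimately show "y \<in> (\<Union>i\<in>K. (\<lambda>v. x(i := v)) ` nbhd (V i) (E i) (x i))" using i by blast
next
  fix y assume "y \<in> (\<Union>i\<in>K. (\<lambda>v. x(i := v)) ` nbhd (V i) (E i) (x i))"
  then obtain i v where "i \<in> K" "v \<in> V i" "E i (x i) v" "y = x(i := v)"
    by (auto simp: nbhd_def)
  then show "y \<in> nbhd (cart_V K V) (cart_E K E) x"
    using assms by (auto simp: nbhd_def cart_V_def cart_E_def PiE_iff extensional_def)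
qed

lemma (in comm_monoid) finprod_nbhd_cart_E:
  assumes "finite K" "\<And>i. i \<in> K \<Longrightarrow> simple_graph (V i) (E i)"
    and "x \<in> cart_V K V" "g \<in> cart_V K V \<rightarrow> carrier G"
  shows "finprod G g (nbhd (cart_V K V) (cart_E K E) x)
       = finprod G (\<lambda>i. finprod G (\<lambda>v. g (x(i := v))) (nbhd (V i) (E i) (x i))) K"
proof -
  let ?N = "\<lambda>i. nbhd (V i) (E i) (x i)"
  have fin: "finite (?N i)" if "i \<in> K" for i
    using assms(2)[OF that] by (simp add: simple_graph_def nbhd_def)
  have not_loop: "x i \<notin> ?N i" if "i \<in> K" for i
    using assms(2)[OF that] by (auto simp: simple_graph_def nbhd_def)
  have inj: "inj_on (\<lambda>v. x(i := v)) (?N i)" for i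
    by (auto simp: inj_on_def dest: fun_cong[where x = i])
  have "x(i := v) \<noteq> x(i' := v')" if "i \<in> K" "i \<noteq> i'" "v \<in> ?N i" for i i' v v'
    using not_loop[OF that(1)] that(2,3) by (metis fun_upd_same fun_upd_other)
  then have disjoint: "pairwise (\<lambda>i i'. disjnt ((\<lambda>v. x(i := v)) ` ?N i) ((\<lambda>v. x(i' := v)) ` ?N i')) K"
    by (auto simp: pairwise_def disjnt_def)
  have g_image: "g \<in> (\<lambda>v. x(i := v)) ` ?N i \<rightarrow> carrier G" if "i \<in> K" for i
    using assms(4) nbhd_cart_E[OF assms(3), of E] that by (auto simp: nbhd_def)
  have "finprod G g (\<Union>i\<in>K. (\<lambda>v. x(i := v)) ` ?N i)
      = finprod G (\<lambda>i. finprod G g ((\<lambda>v. x(i := v)) ` ?N i)) K"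
    using assms(1) fin disjoint g_image by (intro finprod_UN_disjoint) auto
  also have "\<dots> = finprod G (\<lambda>i. finprod G (\<lambda>v. g (x(i := v))) (?N i)) K"
    using g_image by (intro finprod_cong') (auto simp: finprod_reindex[OF _ inj] intro!: finprod_closed)
  finally show ?thesis using nbhd_cart_E[OF assms(3)] by simp
qed

lemma weight_cart_E_apply:
  assumes "finite K" "j \<in> K"
    and "\<And>i. i \<in> K \<Longrightarrow> simple_graph (V i) (E i)"
    and "\<And>i. i \<in> K \<Longrightarrow> regular (V i) (E i) (rr i)"
    and "\<And>i. i \<in> K \<Longrightarrow> comm_group (A i)"
    and "\<And>i. i \<in> K \<Longrightarrow> f i \<in> V i \<rightarrow> carrier (A i)"
    and x: "x \<in> cart_V K V"
  shows "weight (product_group K A) (cart_V K V) (cart_E K E) (\<lambda>y. \<lambda>i\<in>K. f i (y i)) x j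
       = weight (A j) (V j) (E j) (f j) (x j) \<otimes>\<^bsub>A j\<^esub> f j (x j) [^]\<^bsub>A j\<^esub> (sum rr K - rr j)"
proof -
  interpret Aj: comm_group "A j" by (rule assms(5)[OF assms(2)])
  let ?N = "nbhd (cart_V K V) (cart_E K E) x"
  let ?w = "weight (A j) (V j) (E j) (f j) (x j)"
  let ?c = "f j (x j)"
  have N_sub: "?N \<subseteq> cart_V K V" by (auto simp: nbhd_def)
  have "finite (cart_V K V)"
    using assms(1,3) by (auto simp: cart_V_def simple_graph_def intro!: finite_PiE)
  then have N_fin: "finite ?N" using N_sub by (rule finite_subset[rotated])
  have fj: "\<And>y. y \<in> cart_V K V \<Longrightarrow> f j (y j) \<in> carrier (A j)"
    using assms(2,6) by (auto simp: cart_V_def)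
  have c: "?c \<in> carrier (A j)" using fj[OF x] .
  have w: "?w \<in> carrier (A j)" by (rule Aj.weight_closed[OF assms(6)[OF assms(2)]])
  have "weight (product_group K A) (cart_V K V) (cart_E K E) (\<lambda>y. \<lambda>i\<in>K. f i (y i)) x j
      = finprod (A j) (\<lambda>y. f j (y j)) ?N"
    unfolding weight_def using N_sub assms(2,5,6)
    by (subst finprod_product_group_apply[OF _ N_fin]) (fastforce simp: cart_V_def PiE_iff)+
  also have "\<dots> = finprod (A j) (\<lambda>i. finprod (A j) (\<lambda>v. f j ((x(i := v)) j)) (nbhd (V i) (E i) (x i))) K"
    using fj by (intro Aj.finprod_nbhd_cart_E[OF assms(1,3) x]) auto
  also have "\<dots> = finprod (A j) (\<lambda>i. if i = j then ?w else ?c [^]\<^bsub>A j\<^esub> rr i) K"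
  proof (intro Aj.finprod_cong')
    fix i assume i: "i \<in> K"
    have "card (nbhd (V i) (E i) (x i)) = rr i"
      using assms(4)[OF i] x i by (auto simp: regular_def cart_V_def)
    then show "finprod (A j) (\<lambda>v. f j ((x(i := v)) j)) (nbhd (V i) (E i) (x i))
        = (if i = j then ?w else ?c [^]\<^bsub>A j\<^esub> rr i)"
      by (simp add: weight_def Aj.finprod_const[OF c])
  qed (use c w in auto)
  also have "\<dots> = ?w \<otimes>\<^bsub>A j\<^esub> finprod (A j) (\<lambda>i. ?c [^]\<^bsub>A j\<^esub> rr i) (K - {j})"
  proof -
    let ?h = "\<lambda>i. if i = j then ?w else ?c [^]\<^bsub>A j\<^esub> rr i"
    have "finprod (A j) ?h (insert j (K - {j})) = ?h j \<otimes>\<^bsub>A j\<^esub> finprod (A j) ?h (K - {j})"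
      using assms(1) c w by (intro Aj.finprod_insert) auto
    moreover have "finprod (A j) ?h (K - {j}) = finprod (A j) (\<lambda>i. ?c [^]\<^bsub>A j\<^esub> rr i) (K - {j})"
      using c by (intro Aj.finprod_cong') auto
    ultimately show ?thesis using insert_Diff[OF assms(2)] by simp
  qed
  also have "\<dots> = ?w \<otimes>\<^bsub>A j\<^esub> ?c [^]\<^bsub>A j\<^esub> (sum rr K - rr j)"
    using assms(1,2) by (simp add: Aj.finprod_nat_pow_sum[OF c] sum_diff1_nat)
  finally show ?thesis .
qed

lemma bij_betw_PiE_map:
  assumes "\<And>i. i \<in> K \<Longrightarrow> bij_betw (f i) (V i) (W i)"
  shows "bij_betw (\<lambda>x. \<lambda>i\<in>K. f i (x i)) (PiE K V) (PiE K W)"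
proof (rule bij_betw_byWitness[where f' = "\<lambda>z. \<lambda>i\<in>K. inv_into (V i) (f i) (z i)"])
  show "\<forall>x\<in>PiE K V. (\<lambda>i\<in>K. inv_into (V i) (f i) ((\<lambda>i\<in>K. f i (x i)) i)) = x"
    using assms by (auto simp: PiE_iff bij_betw_def fun_eq_iff extensional_def)
  show "\<forall>z\<in>PiE K W. (\<lambda>i\<in>K. f i ((\<lambda>i\<in>K. inv_into (V i) (f i) (z i)) i)) = z"
    using assms by (auto simp: PiE_iff bij_betw_def fun_eq_iff extensional_def f_inv_into_f)
  show "(\<lambda>x. \<lambda>i\<in>K. f i (x i)) ` PiE K V \<subseteq> PiE K W"
    using assms by (fastforce simp: bij_betw_def PiE_iff)
  show "(\<lambda>z. \<lambda>i\<in>K. inv_into (V i) (f i) (z i)) ` PiE K W \<subseteq> PiE K V"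
    using assms by (fastforce simp: bij_betw_def PiE_iff inv_into_into)
qed

lemma distance_antimagic_labelling_cart_E:
  assumes "finite K"
    and "\<And>i. i \<in> K \<Longrightarrow> simple_graph (V i) (E i)"
    and "\<And>i. i \<in> K \<Longrightarrow> regular (V i) (E i) (rr i)"
    and "\<And>i. i \<in> K \<Longrightarrow> comm_group (A i)"
    and shifted: "\<And>i. i \<in> K \<Longrightarrow> shifted_antimagic_labelling (A i) (V i) (E i) (sum rr K - rr i) (f i)"
  shows "distance_antimagic_labelling (product_group K A) (cart_V K V) (cart_E K E)
           (\<lambda>x. \<lambda>i\<in>K. f i (x i))"
proof -
  let ?F = "\<lambda>x. \<lambda>i\<in>K. f i (x i)"
  have bij: "bij_betw (f i) (V i) (carrier (A i))" if "i \<in> K" for i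
    using shifted[OF that] by (simp add: shifted_antimagic_labelling_def)
  have "x = y"
    if x: "x \<in> cart_V K V" and y: "y \<in> cart_V K V"
      and eq: "weight (product_group K A) (cart_V K V) (cart_E K E) ?F x
             = weight (product_group K A) (cart_V K V) (cart_E K E) ?F y" for x y
  proof (rule PiE_ext)
    show "x \<in> PiE K V" "y \<in> PiE K V" using x y by (simp_all add: cart_V_def)
    fix j assume j: "j \<in> K"
    have "weight (A j) (V j) (E j) (f j) (x j) \<otimes>\<^bsub>A j\<^esub> f j (x j) [^]\<^bsub>A j\<^esub> (sum rr K - rr j)
        = weight (A j) (V j) (E j) (f j) (y j) \<otimes>\<^bsub>A j\<^esub> f j (y j) [^]\<^bsub>A j\<^esub> (sum rr K - rr j)"
      using weight_cart_E_apply[OF assms(1) j assms(2-4) bij_betw_imp_funcset[OF bij]] x y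
        fun_cong[OF eq, of j]
      by simp
    moreover have "x j \<in> V j" "y j \<in> V j" using x y j by (auto simp: cart_V_def)
    ultimately show "x j = y j"
      using shifted[OF j] by (auto simp: shifted_antimagic_labelling_def dest: inj_onD)
  qed
  then show ?thesis
    using bij_betw_PiE_map[OF bij]
    by (auto simp: distance_antimagic_labelling_def cart_V_def intro: inj_onI)
qed

theorem mainTheorem7:
  fixes k :: nat
    and V :: "nat \<Rightarrow> 'a set" and E :: "nat \<Rightarrow> 'a \<Rightarrow> 'a \<Rightarrow> bool"
    and A :: "nat \<Rightarrow> ('g, 'c) monoid_scheme"
    and rr n :: "nat \<Rightarrow> nat"
    and I J L :: "nat set"
  defines "r \<equiv> (\<Sum>i\<in>{1..k}. rr i)"
  assumes graphs: "\<And>i. i \<in> {1..k} \<Longrightarrow> simple_graph (V i) (E i)"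
    and reg: "\<And>i. i \<in> {1..k} \<Longrightarrow> regular (V i) (E i) (rr i)"
    and nv: "\<And>i. i \<in> {1..k} \<Longrightarrow> card (V i) = n i \<and> n i \<ge> 2"
    and grp: "\<And>i. i \<in> {1..k} \<Longrightarrow> comm_group (A i) \<and> order (A i) = n i"
    and part: "I \<union> J \<union> L = {1..k}" "I \<inter> J = {}" "I \<inter> L = {}" "J \<inter> L = {}"
    and cI: "\<And>i. i \<in> I \<Longrightarrow> distance_magic (A i) (V i) (E i) \<and> coprime (r - rr i) (n i)"
    and cJ: "\<And>j. j \<in> J \<Longrightarrow> distance_antimagic (A j) (V j) (E j) \<and>
                               group_exponent (A j) dvd (r - rr j)"
    and cL: "\<And>l. l \<in> L \<Longrightarrow> (\<exists>f. balanced_labelling (A l) (V l) (E l) (rr l) f) \<and>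
                               coprime r (n l)"
  shows "distance_antimagic (product_group {1..k} A) (cart_V {1..k} V) (cart_E {1..k} E)"
proof -
  have "\<exists>f. shifted_antimagic_labelling (A i) (V i) (E i) (r - rr i) f" if i: "i \<in> {1..k}" for i
  proof -
    interpret comm_group "A i" using grp[OF i] by blast
    have order: "order (A i) = n i" using grp[OF i] by blast
    then have finite: "finite (carrier (A i))"
      using nv[OF i] order_gt_0_iff_finite by simp
    have "rr i \<le> r" unfolding r_def by (rule member_le_sum) (use i in auto)
    consider "i \<in> I" | "i \<in> J" | "i \<in> L" using i part(1) by blast
    then show ?thesis
    proof cases
      case 1
      then obtain f where f: "distance_magic_labelling (A i) (V i) (E i) f"
        using cI unfolding distance_magic_def by blast
      have "coprime (r - rr i) (order (A i))" using cI[OF 1] order by simp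
      then show ?thesis using distance_magic_labelling_shifted[OF f] by blast
    next
      case 2
      then obtain f where f: "distance_antimagic_labelling (A i) (V i) (E i) f"
        using cJ unfolding distance_antimagic_def by blast
      have "group_exponent (A i) dvd (r - rr i)" using cJ[OF 2] by simp
      then show ?thesis using distance_antimagic_labelling_shifted[OF finite f] by blast
    next
      case 3
      then obtain f where f: "balanced_labelling (A i) (V i) (E i) (rr i) f"
        using cL by blast
      have "coprime (rr i + (r - rr i)) (order (A i))" using cL[OF 3] order \<open>rr i \<le> r\<close> by simp
      then show ?thesis using balanced_labelling_shifted[OF f] by blast
    qed
  qed
  then obtain f where "\<And>i. i \<in> {1..k} \<Longrightarrow> shifted_antimagic_labelling (A i) (V i) (E i) (r - rr i) (f i)"
    by metis
  then have "distance_antimagic_labelling (product_group {1..k} A) (cart_V {1..k} V) (cart_E {1..k} E)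
      (\<lambda>x. \<lambda>i\<in>{1..k}. f i (x i))"
    using grp by (intro distance_antimagic_labelling_cart_E[where rr = rr] graphs reg) (auto simp: r_def)
  then show ?thesis unfolding distance_antimagic_def by blast
qed

end
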